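(* Let $R$ be a commutative Noetherian ring with unity such that $\Gamma_E(R)$ has more than three vertices. Then no associated prime of $R$ is a leaf of $\Gamma_E(R)$; that is, if $y\in R$ and $\operatorname{ann}(y)$ is a prime ideal, then $\deg[y]\neq 1$.
   Context: For $x,y\in R$ write $x\sim y$ iff $\operatorname{ann}(x)=\operatorname{ann}(y)$; $[x]$ denotes the equivalence class of $x$. Let $Z^*(R)$ be the set of nonzero zero divisors of $R$. The graph $\Gamma_E(R)$ is the simple graph whose vertices are the classes $[x]$ with $x\in Z^*(R)$, two distinct vertices $[x],[y]$ being adjacent iff $xy=0$. An associated prime $\operatorname{ann}(y)$ is identified with the vertex $[y]$. A leaf is a vertex of degree $1$. *)

theory Defs
  imports "HOL-Algebra.Ring_Divisibility" "HOL-Algebra.Ideal"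
begin

definition ann :: "('a, 'b) ring_scheme \<Rightarrow> 'a \<Rightarrow> 'a set" where
  "ann R x = {a \<in> carrier R. a \<otimes>\<^bsub>R\<^esub> x = \<zero>\<^bsub>R\<^esub>}"

definition zdiv_star :: "('a, 'b) ring_scheme \<Rightarrow> 'a set" where
  "zdiv_star R = {x \<in> carrier R. x \<noteq> \<zero>\<^bsub>R\<^esub> \<and>
      (\<exists>z \<in> carrier R. z \<noteq> \<zero>\<^bsub>R\<^esub> \<and> x \<otimes>\<^bsub>R\<^esub> z = \<zero>\<^bsub>R\<^esub>)}"

definition eclass :: "('a, 'b) ring_scheme \<Rightarrow> 'a \<Rightarrow> 'a set" where
  "eclass R x = {z \<in> carrier R. ann R z = ann R x}"

definition GE_vertices :: "('a, 'b) ring_scheme \<Rightarrow> 'a set set" where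
  "GE_vertices R = eclass R ` zdiv_star R"

definition GE_adj :: "('a, 'b) ring_scheme \<Rightarrow> 'a set \<Rightarrow> 'a set \<Rightarrow> bool" where
  "GE_adj R A B \<longleftrightarrow> A \<in> GE_vertices R \<and> B \<in> GE_vertices R \<and> A \<noteq> B \<and>
      (\<exists>x \<in> A. \<exists>y \<in> B. x \<otimes>\<^bsub>R\<^esub> y = \<zero>\<^bsub>R\<^esub>)"

text \<open>Degree of a vertex (card of the neighbourhood; 0 if infinite, so degree 1 means exactly one neighbour).\<close>
definition GE_degree :: "('a, 'b) ring_scheme \<Rightarrow> 'a set \<Rightarrow> nat" where
  "GE_degree R A = card {B. GE_adj R A B}"

end

theory Submission
  imports Defs
begin

text \<open>Suppose the class of \<open>y\<close>, with \<open>P = ann(y)\<close> prime, has \<open>[x]\<close> as its only neighbour.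
  A nonzero \<open>z \<in> P\<close> is adjacent to \<open>[y]\<close> or equal to it, so \<open>ann(z)\<close> is \<open>P\<close> or \<open>ann(x)\<close>.
  If \<open>w \<notin> P\<close> and \<open>a w = 0\<close> with \<open>a \<noteq> 0\<close>, primality puts \<open>a\<close> into \<open>P\<close> while \<open>w \<in> ann(a) - P\<close>,
  hence \<open>ann(a) = ann(x)\<close>; in particular every such zero divisor \<open>w\<close> lies in \<open>ann(x)\<close>.
  Consequently any two zero divisors outside \<open>P\<close> have the same annihilator, and the graph
  has at most the three vertices \<open>[y]\<close>, \<open>[x]\<close> and one further class.\<close>

lemma mem_ann_iff: "a \<in> ann R b \<longleftrightarrow> a \<in> carrier R \<and> a \<otimes>\<^bsub>R\<^esub> b = \<zero>\<^bsub>R\<^esub>"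
  unfolding ann_def by auto

lemma eclass_eq_iff:
  assumes "z \<in> carrier R" "x \<in> carrier R"
  shows "eclass R z = eclass R x \<longleftrightarrow> ann R z = ann R x"
  using assms unfolding eclass_def by auto

lemma mem_eclass_iff: "a \<in> eclass R y \<longleftrightarrow> a \<in> carrier R \<and> ann R a = ann R y"
  unfolding eclass_def by auto

lemma (in cring) mem_ann_commute:
  assumes "a \<in> carrier R" "b \<in> carrier R"
  shows "a \<in> ann R b \<longleftrightarrow> b \<in> ann R a"
  using assms m_comm by (auto simp: mem_ann_iff)

lemma (in cring) GE_adj_eclassI:
  assumes "y \<in> carrier R" "z \<in> carrier R" "y \<noteq> \<zero>" "z \<noteq> \<zero>" "y \<otimes> z = \<zero>"
    and "ann R y \<noteq> ann R z"
  shows "GE_adj R (eclass R y) (eclass R z)"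
proof -
  have "y \<in> zdiv_star R" "z \<in> zdiv_star R"
    using assms m_comm unfolding zdiv_star_def by auto
  then show ?thesis
    using assms eclass_eq_iff[of y R z]
    unfolding GE_adj_def GE_vertices_def by (auto simp: mem_eclass_iff)
qed

context
  fixes R (structure) and x y
  assumes cring: "cring R"
    and x_carrier: "x \<in> carrier R" and y_carrier: "y \<in> carrier R" and y_nonzero: "y \<noteq> \<zero>"
    and only_neighbour: "{B. GE_adj R (eclass R y) B} = {eclass R x}"
begin

interpretation cring R by (fact cring)

lemma ann_of_mem_ann_leaf:
  assumes "z \<in> ann R y" "z \<noteq> \<zero>"
  shows "ann R z = ann R y \<or> ann R z = ann R x"
proof (cases "ann R z = ann R y")
  case False
  have "z \<in> carrier R" "y \<otimes> z = \<zero>"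
    using assms y_carrier m_comm by (auto simp: mem_ann_iff)
  with False y_carrier y_nonzero assms(2)
  have "GE_adj R (eclass R y) (eclass R z)"
    by (intro GE_adj_eclassI) auto
  then have "eclass R z = eclass R x" using only_neighbour by auto
  then show ?thesis
    using eclass_eq_iff[OF \<open>z \<in> carrier R\<close> x_carrier] by simp
qed simp

lemma GE_vertices_subset_leaf_cover:
  "GE_vertices R \<subseteq> {eclass R x, eclass R y} \<union> eclass R ` {w \<in> zdiv_star R. w \<notin> ann R y}"
proof
  fix V assume "V \<in> GE_vertices R"
  then obtain w where w: "w \<in> zdiv_star R" "V = eclass R w" unfolding GE_vertices_def by auto
  then have w_carrier: "w \<in> carrier R" and "w \<noteq> \<zero>" unfolding zdiv_star_def by auto
  show "V \<in> {eclass R x, eclass R y} \<union> eclass R ` {w \<in> zdiv_star R. w \<notin> ann R y}"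
  proof (cases "w \<in> ann R y")
    case True
    then have "ann R w = ann R y \<or> ann R w = ann R x"
      using ann_of_mem_ann_leaf \<open>w \<noteq> \<zero>\<close> by blast
    then show ?thesis
      using w(2) eclass_eq_iff[OF w_carrier x_carrier] eclass_eq_iff[OF w_carrier y_carrier] by auto
  next
    case False
    then show ?thesis using w by auto
  qed
qed

context
  assumes prime_ann: "primeideal (ann R y) R"
begin

interpretation P: primeideal "ann R y" R by (fact prime_ann)

lemma ann_eq_neighbour_of_annihilates_outside:
  assumes "w \<in> carrier R" "w \<notin> ann R y" "a \<in> ann R w" "a \<noteq> \<zero>"
  shows "ann R a = ann R x"
proof -
  have a: "a \<in> carrier R" "a \<otimes> w = \<zero>" using assms(3) by (auto simp: mem_ann_iff)
  then have "a \<otimes> w \<in> ann R y" using y_carrier by (simp add: mem_ann_iff)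
  then have "a \<in> ann R y" using P.I_prime[OF a(1) assms(1)] assms(2) by blast
  moreover have "ann R a \<noteq> ann R y"
    using assms(2,3) mem_ann_commute[OF assms(1) a(1)] by auto
  ultimately show ?thesis using ann_of_mem_ann_leaf assms(4) by blast
qed

lemma zdiv_star_outside_mem_ann_neighbour:
  assumes "w \<in> zdiv_star R" "w \<notin> ann R y"
  shows "w \<in> ann R x"
proof -
  obtain c where c: "c \<in> carrier R" "c \<noteq> \<zero>" "w \<otimes> c = \<zero>" and w: "w \<in> carrier R"
    using assms(1) unfolding zdiv_star_def by auto
  then have "c \<in> ann R w" "w \<in> ann R c" using m_comm by (auto simp: mem_ann_iff)
  with ann_eq_neighbour_of_annihilates_outside[OF w assms(2)] c(2) show ?thesis by simp
qed

lemma ann_subset_of_outside: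
  assumes "w \<in> carrier R" "w \<notin> ann R y" "w' \<in> zdiv_star R" "w' \<notin> ann R y"
  shows "ann R w \<subseteq> ann R w'"
proof
  fix t assume t: "t \<in> ann R w"
  have w'_carrier: "w' \<in> carrier R" using assms(3) unfolding zdiv_star_def by blast
  have "t \<in> carrier R" using t by (simp add: mem_ann_iff)
  show "t \<in> ann R w'"
  proof (cases "t = \<zero>")
    case True
    then show ?thesis using w'_carrier by (simp add: mem_ann_iff)
  next
    case False
    then have "ann R t = ann R x"
      using ann_eq_neighbour_of_annihilates_outside[OF assms(1,2) t] by blast
    then have "w' \<in> ann R t" using zdiv_star_outside_mem_ann_neighbour[OF assms(3,4)] by simp
    then show ?thesis using mem_ann_commute[OF \<open>t \<in> carrier R\<close> w'_carrier] by simp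
  qed
qed

lemma GE_vertices_leaf_bound: "finite (GE_vertices R) \<and> card (GE_vertices R) \<le> 3"
proof -
  define Others where "Others = eclass R ` {w \<in> zdiv_star R. w \<notin> ann R y}"
  have Others_subsingleton: "V = V'" if V: "V \<in> Others" and V': "V' \<in> Others" for V V'
  proof -
    obtain w where "V = eclass R w" and w: "w \<in> zdiv_star R" "w \<notin> ann R y"
      using V unfolding Others_def by blast
    moreover obtain w' where "V' = eclass R w'" and w': "w' \<in> zdiv_star R" "w' \<notin> ann R y"
      using V' unfolding Others_def by blast
    moreover have "w \<in> carrier R" "w' \<in> carrier R" using w w' unfolding zdiv_star_def by auto
    ultimately show ?thesis
      using ann_subset_of_outside[of w w'] ann_subset_of_outside[of w' w] eclass_eq_iff[of w R w']
      unfolding zdiv_star_def by auto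
  qed
  have "Others = {} \<or> (\<exists>V. Others = {V})" using Others_subsingleton by blast
  then have "finite Others" "card Others \<le> 1" by auto
  then have "finite ({eclass R x, eclass R y} \<union> Others)" by simp
  then have "finite (GE_vertices R)" "card (GE_vertices R) \<le> card ({eclass R x, eclass R y} \<union> Others)"
    using GE_vertices_subset_leaf_cover unfolding Others_def[symmetric]
    by (auto intro: finite_subset card_mono)
  moreover have "card {eclass R x, eclass R y} \<le> 2" by (simp add: card_insert_if)
  then have "card ({eclass R x, eclass R y} \<union> Others) \<le> 3"
    using card_Un_le[of "{eclass R x, eclass R y}" Others] \<open>card Others \<le> 1\<close> by linarith
  ultimately show ?thesis by simp
qed

end

end

theorem proposition3p2:
  fixes R :: "('a, 'b) ring_scheme" and y :: 'a
  assumes "cring R" and "noetherian_ring R"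
    and "infinite (GE_vertices R) \<or> card (GE_vertices R) > 3"
    and "y \<in> carrier R" and "primeideal (ann R y) R"
  shows "GE_degree R (eclass R y) \<noteq> 1"
proof
  interpret cring R by fact
  assume "GE_degree R (eclass R y) = 1"
  then obtain B where B: "{B. GE_adj R (eclass R y) B} = {B}"
    unfolding GE_degree_def by (meson card_1_singletonE)
  then have "B \<in> GE_vertices R" unfolding GE_adj_def by auto
  then obtain x where x: "x \<in> carrier R" "B = eclass R x"
    unfolding GE_vertices_def zdiv_star_def by auto
  have "y \<noteq> \<zero>\<^bsub>R\<^esub>"
    using primeideal.I_notcarr[OF assms(5)] by (auto simp: ann_def)
  then have "finite (GE_vertices R) \<and> card (GE_vertices R) \<le> 3"
    using GE_vertices_leaf_bound[OF assms(1) x(1) assms(4) _ _ assms(5)] B x(2) by blast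
  with assms(3) show False by auto
qed

end
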